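(* Assume the setting described in the context and let $\beta<0$. Then the fixed point equation $$\rho(x)=\frac{\Upsilon(x)\exp\big(-\beta\int_{\mathbb{R}^2}\ln|x-y|\,\rho(y)\,dy+2H(x)\big)}{\int_{\mathbb{R}^2}\Upsilon(z)\exp\big(-\beta\int_{\mathbb{R}^2}\ln|z-y|\,\rho(y)\,dy+2H(z)\big)\,dz}$$ has at most one solution $\rho$ (so the solution $\rho_{\beta,H}$ is unique).
   Context: Let $\Upsilon\in L^\infty(\mathbb{R}^2)$, $\Upsilon\ge0$, $\Upsilon\not\equiv0$, and $H$ an entire harmonic function on $\mathbb{R}^2$ such that for every $0<\gamma<2$, $\int_{B_1(y)}\Upsilon(x)e^{2H(x)}|x-y|^{-\gamma}dx\to0$ as $|y|\to\infty$, and $\int\Upsilon(x)e^{2H(x)}|x|^qdx<\infty$ for some $q>0$. A solution means a probability density $\rho\ge0$ on $\mathbb{R}^2$ with finite logarithmic energy, $\int\int|\ln|x-y||\rho(x)\rho(y)\,dx\,dy<\infty$, for which the integrals in the equation are finite and the normalizing denominator is positive, satisfying the equation almost everywhere. *)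

theory Defs
  imports "HOL-Analysis.Analysis"
begin

text \<open>The plane R^2 is identified with the type complex (a euclidean space with
  Lebesgue measure lborel); |x - y| is norm (x - y).\<close>

definition entire_harmonic :: "(complex \<Rightarrow> real) \<Rightarrow> bool" where
  "entire_harmonic H \<longleftrightarrow>
     (\<exists>Hx Hy Hxx Hxy Hyx Hyy.
        (\<forall>z. (H has_derivative (\<lambda>h. Re h * Hx z + Im h * Hy z)) (at z)) \<and>
        (\<forall>z. (Hx has_derivative (\<lambda>h. Re h * Hxx z + Im h * Hxy z)) (at z)) \<and>
        (\<forall>z. (Hy has_derivative (\<lambda>h. Re h * Hyx z + Im h * Hyy z)) (at z)) \<and>
        continuous_on UNIV Hxx \<and> continuous_on UNIV Hxy \<and>
        continuous_on UNIV Hyx \<and> continuous_on UNIV Hyy \<and>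
        (\<forall>z. Hxx z + Hyy z = 0))"

definition log_pot :: "(complex \<Rightarrow> real) \<Rightarrow> complex \<Rightarrow> real" where
  "log_pot \<rho> x = (\<integral>y. ln (norm (x - y)) * \<rho> y \<partial>lborel)"

definition fp_num :: "(complex \<Rightarrow> real) \<Rightarrow> (complex \<Rightarrow> real) \<Rightarrow> real \<Rightarrow> (complex \<Rightarrow> real)
    \<Rightarrow> complex \<Rightarrow> real" where
  "fp_num \<Upsilon> H \<beta> \<rho> x = \<Upsilon> x * exp (- \<beta> * log_pot \<rho> x + 2 * H x)"

definition is_fp_solution :: "(complex \<Rightarrow> real) \<Rightarrow> (complex \<Rightarrow> real) \<Rightarrow> real
    \<Rightarrow> (complex \<Rightarrow> real) \<Rightarrow> bool" where
  "is_fp_solution \<Upsilon> H \<beta> \<rho> \<longleftrightarrow>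
     \<rho> \<in> borel_measurable lborel \<and>
     (\<forall>x. 0 \<le> \<rho> x) \<and>
     (\<integral>\<^sup>+ x. ennreal (\<rho> x) \<partial>lborel) = 1 \<and>
     (\<integral>\<^sup>+ p. ennreal (\<bar>ln (norm (fst p - snd p))\<bar> * \<rho> (fst p) * \<rho> (snd p))
        \<partial>(lborel \<Otimes>\<^sub>M lborel)) < \<infinity> \<and>
     (AE x in lborel. integrable lborel (\<lambda>y. ln (norm (x - y)) * \<rho> y)) \<and>
     integrable lborel (fp_num \<Upsilon> H \<beta> \<rho>) \<and>
     (\<integral>z. fp_num \<Upsilon> H \<beta> \<rho> z \<partial>lborel) > 0 \<and>
     (AE x in lborel. \<rho> x = fp_num \<Upsilon> H \<beta> \<rho> x / (\<integral>z. fp_num \<Upsilon> H \<beta> \<rho> z \<partial>lborel))"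

end

(* If rho1 and rho2 both solve the fixed point equation and f = rho1 - rho2, then on
   {Upsilon > 0} the equation gives ln rho_i = ln Upsilon - beta U_i + 2 H - ln Z_i with
   U_i x = int ln|x - y| rho_i(y) dy.  Since int f = 0 the constants ln Z_i drop out, and
     0 <= int f (ln rho1 - ln rho2) = - beta int int ln|x - y| f(x) f(y) dx dy <= 0,
   the last step because beta < 0 and ln|x - y| is conditionally negative definite: by
   Frullani, ln r = int_0^oo (exp (-t) - exp (-t r^2)) / (2 t) dt, and Gaussian kernels are
   positive definite.  Hence f (ln rho1 - ln rho2) = 0 a.e., i.e. rho1 = rho2 a.e.
   Fubini is justified by the finiteness of the mutual energy int int |ln|x - y|| rho1 rho2,
   obtained from logarithmic moments and an AM-GM inequality for the positive definite kernel
   int_1^oo exp (-t r^2) / (2 t) dt, which carries the singularity of ln at 0. *)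

theory Submission
  imports Defs "HOL-Probability.Distributions" "HOL-Real_Asymp.Real_Asymp"
begin

lemma (in pair_sigma_finite) nn_integral_product:
  assumes [measurable]: "f \<in> borel_measurable M1" "g \<in> borel_measurable M2"
  shows "(\<integral>\<^sup>+ p. f (fst p) * g (snd p) \<partial>(M1 \<Otimes>\<^sub>M M2)) = (\<integral>\<^sup>+ x. f x \<partial>M1) * (\<integral>\<^sup>+ y. g y \<partial>M2)"
  by (subst M2.nn_integral_fst[symmetric])
     (simp_all add: nn_integral_cmult nn_integral_multc)

lemma (in pair_sigma_finite) integrable_product:
  fixes f :: "'a \<Rightarrow> real" and g :: "'b \<Rightarrow> real"
  assumes f: "integrable M1 f" and g: "integrable M2 g"
  shows "integrable (M1 \<Otimes>\<^sub>M M2) (\<lambda>p. f (fst p) * g (snd p))"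
    and "(\<integral>p. f (fst p) * g (snd p) \<partial>(M1 \<Otimes>\<^sub>M M2)) = (\<integral>x. f x \<partial>M1) * (\<integral>y. g y \<partial>M2)"
proof -
  have [measurable]: "f \<in> borel_measurable M1" "g \<in> borel_measurable M2"
    using f g by auto
  have "(\<integral>\<^sup>+ p. ennreal (norm (f (fst p) * g (snd p))) \<partial>(M1 \<Otimes>\<^sub>M M2))
      = (\<integral>\<^sup>+ x. ennreal (norm (f x)) \<partial>M1) * (\<integral>\<^sup>+ y. ennreal (norm (g y)) \<partial>M2)"
    by (subst nn_integral_product[symmetric]) (auto simp: abs_mult ennreal_mult)
  also have "\<dots> < \<infinity>"
    using f g by (simp add: integrable_iff_bounded ennreal_mult_less_top)
  finally show int: "integrable (M1 \<Otimes>\<^sub>M M2) (\<lambda>p. f (fst p) * g (snd p))"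
    by (intro integrableI_bounded) auto
  show "(\<integral>p. f (fst p) * g (snd p) \<partial>(M1 \<Otimes>\<^sub>M M2)) = (\<integral>x. f x \<partial>M1) * (\<integral>y. g y \<partial>M2)"
    using integral_fst'[OF int] by simp
qed

lemma (in pair_sigma_finite) Fubini_integral_nonneg:
  fixes F :: "'a \<times> 'b \<Rightarrow> real"
  assumes F: "integrable (M1 \<Otimes>\<^sub>M M2) F"
    and G: "AE x in M1. (\<integral>y. F (x, y) \<partial>M2) = G x"
    and nonneg: "AE y in M2. 0 \<le> (\<integral>x. F (x, y) \<partial>M1)"
  shows "0 \<le> (\<integral>x. G x \<partial>M1)"
proof (cases "integrable M1 G")
  case False
  then show ?thesis by (simp add: not_integrable_integral_eq)
next
  case True
  have "(\<integral>x. G x \<partial>M1) = (\<integral>x. \<integral>y. F (x, y) \<partial>M2 \<partial>M1)"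
    using G True integrable_fst'[OF F] by (intro integral_cong_AE) (auto simp: eq_commute)
  also have "\<dots> = (\<integral>y. \<integral>x. F (x, y) \<partial>M1 \<partial>M2)"
    using F by (simp add: Fubini_integral)
  also have "0 \<le> \<dots>"
    using nonneg by (rule integral_nonneg_AE)
  finally show ?thesis .
qed

lemma AE_lborel_pair_neq: "AE p in lborel \<Otimes>\<^sub>M (lborel :: 'a::euclidean_space measure). fst p \<noteq> snd p"
proof (rule lborel_pair.AE_pair_measure)
  show "{p \<in> space (lborel \<Otimes>\<^sub>M lborel). fst p \<noteq> snd p} \<in> sets (lborel \<Otimes>\<^sub>M (lborel :: 'a measure))"
    by measurable
  show "AE x in lborel. AE y in lborel. fst (x, y) \<noteq> snd (x :: 'a, y)"
    using AE_lborel_singleton by (auto simp: eq_commute)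
qed

section \<open>Frullani's integral for the logarithm\<close>

lemma nn_integral_exp_neg_atLeast_0:
  fixes s :: real assumes "0 < s"
  shows "(\<integral>\<^sup>+ t. ennreal (exp (- t * s) / 2) * indicator {0..} t \<partial>lborel) = ennreal (1 / (2 * s))"
proof -
  have "(\<integral>\<^sup>+ t. ennreal (exp (- t * s) / 2) * indicator {0..} t \<partial>lborel) = 0 - (- exp (- 0 * s) / (2 * s))"
  proof (rule nn_integral_FTC_atLeast)
    fix x :: real
    show "DERIV (\<lambda>t. - exp (- t * s) / (2 * s)) x :> exp (- x * s) / 2"
      using assms by (auto intro!: derivative_eq_intros simp: field_simps)
    show "((\<lambda>t. - exp (- t * s) / (2 * s)) \<longlongrightarrow> 0) at_top"
      using assms by real_asymp
  qed auto
  then show ?thesis by simp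
qed

lemma nn_integral_exp_neg_Icc:
  fixes a b t :: real assumes "0 < t" "a \<le> b"
  shows "(\<integral>\<^sup>+ s. ennreal (exp (- t * s) / 2) * indicator {a..b} s \<partial>lborel)
    = ennreal ((exp (- t * a) - exp (- t * b)) / (2 * t))"
proof -
  have "(\<integral>\<^sup>+ s. ennreal (exp (- t * s) / 2) * indicator {a..b} s \<partial>lborel) =
     (- exp (- t * b) / (2 * t)) - (- exp (- t * a) / (2 * t))"
  proof (rule nn_integral_FTC_Icc)
    fix x
    show "DERIV (\<lambda>s. - exp (- t * s) / (2 * t)) x :> exp (- t * x) / 2"
      using assms by (auto intro!: derivative_eq_intros simp: field_simps)
  qed (use assms in auto)
  then show ?thesis by (simp add: field_simps diff_divide_distrib)
qed

lemma nn_integral_inverse_Icc: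
  fixes a b :: real assumes "0 < a" "a \<le> b"
  shows "(\<integral>\<^sup>+ s. ennreal (1 / (2 * s)) * indicator {a..b} s \<partial>lborel) = ennreal ((ln b - ln a) / 2)"
proof -
  have "(\<integral>\<^sup>+ s. ennreal (1 / (2 * s)) * indicator {a..b} s \<partial>lborel) = ln b / 2 - ln a / 2"
  proof (rule nn_integral_FTC_Icc)
    fix x assume "x \<in> {a..b}"
    then show "DERIV (\<lambda>s. ln s / 2) x :> 1 / (2 * x)" "0 \<le> 1 / (2 * x)"
      using assms by (auto intro!: derivative_eq_intros simp: field_simps)
  qed (use assms in auto)
  then show ?thesis by (simp add: diff_divide_distrib)
qed

text \<open>Integrate \<open>exp (- t s) / 2\<close> over \<open>(t, s) \<in> [0, \<infinity>) \<times> [a, b]\<close> in both orders.\<close>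
lemma frullani_nn_integral:
  fixes a b :: real assumes ab: "0 < a" "a \<le> b"
  shows "(\<integral>\<^sup>+ t. ennreal ((exp (- t * a) - exp (- t * b)) / (2 * t)) * indicator {0..} t \<partial>lborel)
     = ennreal ((ln b - ln a) / 2)"
proof -
  have "(\<integral>\<^sup>+ t. ennreal ((exp (- t * a) - exp (- t * b)) / (2 * t)) * indicator {0..} t \<partial>lborel)
     = (\<integral>\<^sup>+ t. (\<integral>\<^sup>+ s. ennreal (exp (- t * s) / 2) * indicator {a..b} s * indicator {0..} t \<partial>lborel) \<partial>lborel)"
  proof (intro nn_integral_cong_AE, use AE_lborel_singleton[of 0] in eventually_elim)
    case (elim t)
    show ?case
      by (cases "0 \<le> t") (use elim nn_integral_exp_neg_Icc[OF _ ab(2), of t] in auto)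
  qed
  also have "\<dots> = (\<integral>\<^sup>+ s. (\<integral>\<^sup>+ t. ennreal (exp (- t * s) / 2) * indicator {a..b} s * indicator {0..} t \<partial>lborel) \<partial>lborel)"
    by (rule lborel_pair.Fubini') measurable
  also have "\<dots> = (\<integral>\<^sup>+ s. ennreal (1 / (2 * s)) * indicator {a..b} s \<partial>lborel)"
  proof (rule nn_integral_cong)
    fix s :: real
    show "(\<integral>\<^sup>+ t. ennreal (exp (- t * s) / 2) * indicator {a..b} s * indicator {0..} t \<partial>lborel) =
       ennreal (1 / (2 * s)) * indicator {a..b} s"
      by (cases "s \<in> {a..b}") (use ab nn_integral_exp_neg_atLeast_0[of s] in auto)
  qed
  also have "\<dots> = ennreal ((ln b - ln a) / 2)" by (rule nn_integral_inverse_Icc[OF ab])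
  finally show ?thesis .
qed

definition log_integrand :: "real \<Rightarrow> real \<Rightarrow> real" where
  "log_integrand r t = indicator {0..} t * ((exp (- t) - exp (- t * r\<^sup>2)) / (2 * t))"

lemma log_integrand_measurable[measurable]:
  assumes [measurable]: "f \<in> borel_measurable M" "g \<in> borel_measurable M"
  shows "(\<lambda>x. log_integrand (f x) (g x)) \<in> borel_measurable M"
  unfolding log_integrand_def by measurable

lemma abs_log_integrand:
  "\<bar>log_integrand r t\<bar> = indicator {0..} t *
     ((exp (- t * min 1 (r\<^sup>2)) - exp (- t * max 1 (r\<^sup>2))) / (2 * t))"
  by (cases "0 \<le> t") (auto simp: log_integrand_def min_def max_def abs_if divide_simps)

lemma log_integrand_sgn:
  "log_integrand r t = (if 1 \<le> \<bar>r\<bar> then 1 else - 1) * \<bar>log_integrand r t\<bar>"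
proof -
  have "1 \<le> \<bar>r\<bar> \<longleftrightarrow> 1 \<le> r\<^sup>2"
    by (metis abs_le_square_iff abs_one one_power2)
  then show ?thesis
    by (cases "0 \<le> t") (auto simp: log_integrand_def abs_if divide_simps)
qed

lemma nn_integral_abs_log_integrand:
  assumes r: "0 < r"
  shows "(\<integral>\<^sup>+ t. ennreal \<bar>log_integrand r t\<bar> \<partial>lborel) = ennreal \<bar>ln r\<bar>"
proof -
  have "(\<integral>\<^sup>+ t. ennreal \<bar>log_integrand r t\<bar> \<partial>lborel)
      = ennreal ((ln (max 1 (r\<^sup>2)) - ln (min 1 (r\<^sup>2))) / 2)"
    unfolding abs_log_integrand using r
    by (subst frullani_nn_integral[symmetric]) (auto intro!: nn_integral_cong simp: indicator_def)
  also have "(ln (max 1 (r\<^sup>2)) - ln (min 1 (r\<^sup>2))) / 2 = \<bar>ln r\<bar>"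
  proof (cases "1 \<le> r")
    case True
    then show ?thesis using r by (auto simp: min_def max_def ln_realpow)
  next
    case False
    then have "r\<^sup>2 < 1" using r by (simp add: power_less_one_iff)
    then show ?thesis using r False by (auto simp: min_def max_def ln_realpow)
  qed
  finally show ?thesis .
qed

lemma has_bochner_integral_log_integrand:
  assumes r: "0 < r"
  shows "has_bochner_integral lborel (log_integrand r) (ln r)"
proof -
  have "has_bochner_integral lborel (\<lambda>t. \<bar>log_integrand r t\<bar>) \<bar>ln r\<bar>"
    by (rule has_bochner_integral_nn_integral) (auto simp: nn_integral_abs_log_integrand[OF r])
  then have "has_bochner_integral lborel (\<lambda>t. (if 1 \<le> \<bar>r\<bar> then 1 else - 1) * \<bar>log_integrand r t\<bar>)
      ((if 1 \<le> \<bar>r\<bar> then 1 else - 1) * \<bar>ln r\<bar>)"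
    by (rule has_bochner_integral_mult_right)
  moreover have "(if 1 \<le> \<bar>r\<bar> then 1 else - 1) * \<bar>ln r\<bar> = ln r"
    using r by auto
  moreover have "log_integrand r = (\<lambda>t. (if 1 \<le> \<bar>r\<bar> then 1 else - 1) * \<bar>log_integrand r t\<bar>)"
    using log_integrand_sgn by blast
  ultimately show ?thesis by simp
qed

lemma abs_log_integrand_le:
  fixes r t :: real assumes r: "0 < r" "r < 1"
  shows "\<bar>log_integrand r t\<bar> \<le> indicator {0..1} t / 2 + indicator {1..} t * (exp (- t * r\<^sup>2) / (2 * t))"
proof (cases "0 < t")
  case True
  have "r\<^sup>2 \<le> 1"
    using r by (simp add: power_le_one)
  then have "exp (- t) \<le> exp (- t * r\<^sup>2)"
    using True by (simp add: mult_left_le)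
  then have abs_eq: "\<bar>log_integrand r t\<bar> = (exp (- t * r\<^sup>2) - exp (- t)) / (2 * t)"
    using True by (simp add: log_integrand_def abs_if field_simps)
  show ?thesis
  proof (cases "t \<le> 1")
    case True
    have "exp (- t * r\<^sup>2) \<le> 1"
      using \<open>0 < t\<close> by simp
    moreover have "1 - exp (- t) \<le> t"
      using exp_ge_add_one_self[of "- t"] by simp
    ultimately have "exp (- t * r\<^sup>2) - exp (- t) \<le> t"
      by linarith
    then have "\<bar>log_integrand r t\<bar> \<le> 1 / 2"
      unfolding abs_eq using \<open>0 < t\<close> by (simp add: field_simps)
    moreover have "indicator {0..1} t / 2 = (1 / 2 :: real)"
      using True \<open>0 < t\<close> by (simp add: indicator_def)
    moreover have "0 \<le> indicator {1..} t * (exp (- t * r\<^sup>2) / (2 * t))"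
      using \<open>0 < t\<close> by simp
    ultimately show ?thesis
      by linarith
  next
    case False
    then show ?thesis
      unfolding abs_eq using \<open>0 < t\<close> by (simp add: indicator_def divide_right_mono)
  qed
qed (auto simp: log_integrand_def indicator_def)

section \<open>Gaussian integrals\<close>

lemma nn_integral_lborel_translate:
  fixes c :: "'a::euclidean_space"
  assumes [measurable]: "f \<in> borel_measurable borel"
  shows "(\<integral>\<^sup>+ z. f z \<partial>lborel) = (\<integral>\<^sup>+ z. f (c + z) \<partial>lborel)"
proof -
  have "(\<integral>\<^sup>+ z. f z \<partial>lborel) = (\<integral>\<^sup>+ z. f z \<partial>distr lborel borel ((+) c))"
    by (simp add: lborel_distr_plus)
  also have "\<dots> = (\<integral>\<^sup>+ z. f (c + z) \<partial>lborel)"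
    by (subst nn_integral_distr) auto
  finally show ?thesis .
qed

lemma nn_integral_gaussian_real:
  fixes s :: real assumes s: "0 < s"
  shows "(\<integral>\<^sup>+ u. ennreal (exp (- s * u\<^sup>2)) \<partial>lborel) = ennreal (sqrt (pi / s))"
proof -
  define \<sigma> where "\<sigma> = 1 / sqrt (2 * s)"
  have "exp (- s * u\<^sup>2) = sqrt (pi / s) * normal_density 0 \<sigma> u" for u
    using s by (simp add: normal_density_def \<sigma>_def real_sqrt_divide field_simps)
  moreover have "0 < \<sigma>"
    using s by (simp add: \<sigma>_def)
  then have "(\<integral>\<^sup>+ u. ennreal (normal_density 0 \<sigma> u) \<partial>lborel) = 1"
    by (subst nn_integral_eq_integral) auto
  ultimately show ?thesis
    using s by (simp add: ennreal_mult nn_integral_cmult)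
qed

lemma nn_integral_gaussian:
  fixes s :: real assumes s: "0 < s"
  shows "(\<integral>\<^sup>+ x. ennreal (exp (- s * (norm x)\<^sup>2)) \<partial>(lborel :: 'a::euclidean_space measure))
    = ennreal (sqrt (pi / s) ^ DIM('a))"
proof -
  have prod: "ennreal (exp (- s * (norm x)\<^sup>2)) = (\<Prod>b\<in>Basis. ennreal (exp (- s * (x \<bullet> b)\<^sup>2)))" for x :: 'a
  proof -
    have "(norm x)\<^sup>2 = (\<Sum>b\<in>Basis. (x \<bullet> b)\<^sup>2)"
      unfolding power2_norm_eq_inner by (subst euclidean_inner) (simp add: power2_eq_square)
    then show ?thesis
      by (simp add: prod_ennreal exp_sum[symmetric] sum_distrib_left sum_negf[symmetric])
  qed
  then have "(\<integral>\<^sup>+ x. ennreal (exp (- s * (norm x)\<^sup>2)) \<partial>(lborel :: 'a measure))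
      = (\<integral>\<^sup>+ x. (\<Prod>b\<in>Basis. ennreal (exp (- s * (x \<bullet> b)\<^sup>2))) \<partial>(lborel :: 'a measure))"
    by (simp only: prod)
  also have "\<dots> = (\<Prod>b\<in>(Basis :: 'a set). \<integral>\<^sup>+ u. ennreal (exp (- s * u\<^sup>2)) \<partial>lborel)"
    by (rule nn_integral_lborel_prod) auto
  finally show ?thesis
    using s nn_integral_gaussian_real[OF s] by (simp add: ennreal_power)
qed

text \<open>Completing the square: the product of two Gaussians centred at \<open>x\<close> and \<open>y\<close> is a
  Gaussian centred at \<open>(x + y) / 2\<close>, by the parallelogram law.\<close>
lemma has_bochner_integral_gaussian_product:
  fixes x y :: "'a::euclidean_space" and t :: real
  assumes t: "0 < t"
  shows "has_bochner_integral lborel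
    (\<lambda>z. exp (- 2 * t * (norm (x - z))\<^sup>2) * exp (- 2 * t * (norm (y - z))\<^sup>2))
    (exp (- t * (norm (x - y))\<^sup>2) * sqrt (pi / (4 * t)) ^ DIM('a))"
proof (rule has_bochner_integral_nn_integral)
  define d where "d = (x - y) /\<^sub>R 2"
  define m where "m = y + d"
  have shift: "exp (- 2 * t * (norm (x - (m + w)))\<^sup>2) * exp (- 2 * t * (norm (y - (m + w)))\<^sup>2)
      = exp (- t * (norm (x - y))\<^sup>2) * exp (- (4 * t) * (norm w)\<^sup>2)" for w
  proof -
    have xy: "x - y = 2 *\<^sub>R d"
      by (simp add: d_def)
    then have "x - (m + w) = d - w" "norm (y - (m + w)) = norm (d + w)"
      by (simp_all add: m_def algebra_simps scaleR_2 norm_minus_commute)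
    then have "- 2 * t * (norm (x - (m + w)))\<^sup>2 + - 2 * t * (norm (y - (m + w)))\<^sup>2
        = - 2 * t * ((norm (d - w))\<^sup>2 + (norm (d + w))\<^sup>2)"
      by (simp add: algebra_simps)
    also have "(norm (d - w))\<^sup>2 + (norm (d + w))\<^sup>2 = 2 * (norm d)\<^sup>2 + 2 * (norm w)\<^sup>2"
      by (simp add: power2_norm_eq_inner inner_diff inner_add inner_commute)
    also have "- 2 * t * (2 * (norm d)\<^sup>2 + 2 * (norm w)\<^sup>2)
        = - t * (norm (x - y))\<^sup>2 + - (4 * t) * (norm w)\<^sup>2"
      by (simp add: xy algebra_simps)
    finally show ?thesis
      by (simp flip: exp_add)
  qed
  have "(\<integral>\<^sup>+ z. ennreal (exp (- 2 * t * (norm (x - z))\<^sup>2) * exp (- 2 * t * (norm (y - z))\<^sup>2)) \<partial>lborel)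
      = (\<integral>\<^sup>+ w. ennreal (exp (- t * (norm (x - y))\<^sup>2) * exp (- (4 * t) * (norm (w :: 'a))\<^sup>2)) \<partial>lborel)"
    by (subst nn_integral_lborel_translate[where c = m]) (simp_all only: shift, measurable)
  also have "\<dots> = ennreal (exp (- t * (norm (x - y))\<^sup>2) * sqrt (pi / (4 * t)) ^ DIM('a))"
    using t nn_integral_gaussian[of "4 * t", where 'a = 'a]
    by (simp add: ennreal_mult nn_integral_cmult)
  finally show "(\<integral>\<^sup>+ z. ennreal (exp (- 2 * t * (norm (x - z))\<^sup>2) * exp (- 2 * t * (norm (y - z))\<^sup>2)) \<partial>lborel)
      = ennreal (exp (- t * (norm (x - y))\<^sup>2) * sqrt (pi / (4 * t)) ^ DIM('a))" .
qed (use t in auto)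

section \<open>Positive definite kernels\<close>

lemma integrable_product_kernel_pairing:
  fixes f :: "'a::euclidean_space \<Rightarrow> real" and k :: "'a \<Rightarrow> 'b::euclidean_space \<Rightarrow> real"
  assumes f: "integrable lborel f"
    and k_meas[measurable]: "(\<lambda>(x, z). k x z) \<in> borel_measurable (lborel \<Otimes>\<^sub>M lborel)"
    and k_nonneg: "\<And>x z. 0 \<le> k x z"
    and K: "\<And>x y. has_bochner_integral lborel (\<lambda>z. k x z * k y z) (K x y)"
    and K_le: "\<And>x y. K x y \<le> C"
  shows "integrable ((lborel \<Otimes>\<^sub>M lborel) \<Otimes>\<^sub>M lborel)
    (\<lambda>q. k (fst (fst q)) (snd q) * k (snd (fst q)) (snd q) * (f (fst (fst q)) * f (snd (fst q))))"
proof -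
  have [measurable]: "f \<in> borel_measurable lborel"
    using f by auto
  have nn_K: "(\<integral>\<^sup>+ z. ennreal (k x z * k y z) \<partial>lborel) = ennreal (K x y)" for x y
    using K[of x y] by (simp add: has_bochner_integral_iff nn_integral_eq_integral k_nonneg)
  have "(\<integral>\<^sup>+ q. ennreal (norm (k (fst (fst q)) (snd q) * k (snd (fst q)) (snd q) * (f (fst (fst q)) * f (snd (fst q)))))
      \<partial>((lborel \<Otimes>\<^sub>M lborel) \<Otimes>\<^sub>M lborel))
      = (\<integral>\<^sup>+ p. \<integral>\<^sup>+ z. ennreal (k (fst p) z * k (snd p) z) * ennreal (\<bar>f (fst p)\<bar> * \<bar>f (snd p)\<bar>) \<partial>lborel \<partial>(lborel \<Otimes>\<^sub>M lborel))"
    by (subst lborel.nn_integral_fst[symmetric])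
       (auto simp: abs_mult k_nonneg ennreal_mult'[symmetric] intro!: nn_integral_cong)
  also have "\<dots> = (\<integral>\<^sup>+ p. ennreal (K (fst p) (snd p)) * ennreal (\<bar>f (fst p)\<bar> * \<bar>f (snd p)\<bar>) \<partial>(lborel \<Otimes>\<^sub>M lborel))"
    by (intro nn_integral_cong) (simp add: nn_integral_multc nn_K)
  also have "\<dots> \<le> (\<integral>\<^sup>+ p. ennreal C * (ennreal \<bar>f (fst p)\<bar> * ennreal \<bar>f (snd p)\<bar>) \<partial>(lborel \<Otimes>\<^sub>M lborel))"
    by (intro nn_integral_mono) (simp add: K_le ennreal_leI mult_right_mono flip: ennreal_mult')
  also have "\<dots> = ennreal C * ((\<integral>\<^sup>+ x. ennreal (norm (f x)) \<partial>lborel) * (\<integral>\<^sup>+ x. ennreal (norm (f x)) \<partial>lborel))"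
    by (subst nn_integral_cmult, measurable, subst lborel_pair.nn_integral_product) auto
  also have "\<dots> < \<infinity>"
    using f by (simp add: integrable_iff_bounded ennreal_mult_less_top)
  finally show ?thesis
    by (rule integrableI_bounded[rotated]) measurable
qed

text \<open>Fubini: integrating first over \<open>z\<close> gives the pairing of \<open>K\<close> with \<open>f \<otimes> f\<close>, integrating
  first over \<open>(x, y)\<close> gives \<open>\<integral> (\<integral> k x z f x dx)\<^sup>2 dz\<close>.\<close>
lemma product_kernel_nonneg:
  fixes f :: "'a::euclidean_space \<Rightarrow> real" and k :: "'a \<Rightarrow> 'b::euclidean_space \<Rightarrow> real"
  assumes f: "integrable lborel f"
    and k_meas[measurable]: "(\<lambda>(x, z). k x z) \<in> borel_measurable (lborel \<Otimes>\<^sub>M lborel)"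
    and k_nonneg: "\<And>x z. 0 \<le> k x z" and k_le_1: "\<And>x z. k x z \<le> 1"
    and K: "\<And>x y. has_bochner_integral lborel (\<lambda>z. k x z * k y z) (K x y)"
    and K_le: "\<And>x y. K x y \<le> C"
  shows "0 \<le> (\<integral>p. K (fst p) (snd p) * (f (fst p) * f (snd p)) \<partial>(lborel \<Otimes>\<^sub>M lborel))"
proof -
  interpret P: pair_sigma_finite "lborel \<Otimes>\<^sub>M lborel :: ('a \<times> 'a) measure" "lborel :: 'b measure"
    unfolding pair_sigma_finite_def lborel_prod by (auto intro: sigma_finite_lborel)
  have [measurable]: "f \<in> borel_measurable lborel"
    using f by auto
  define F where "F q = k (fst (fst q)) (snd q) * k (snd (fst q)) (snd q) * (f (fst (fst q)) * f (snd (fst q)))"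
    for q :: "('a \<times> 'a) \<times> 'b"
  have F: "integrable ((lborel \<Otimes>\<^sub>M lborel) \<Otimes>\<^sub>M lborel) F"
    unfolding F_def by (rule integrable_product_kernel_pairing[OF f k_meas k_nonneg K K_le])
  have G: "AE p in lborel \<Otimes>\<^sub>M lborel. (\<integral>z. F (p, z) \<partial>lborel) = K (fst p) (snd p) * (f (fst p) * f (snd p))"
    using K by (simp add: F_def has_bochner_integral_integral_eq)
  have nonneg: "0 \<le> (\<integral>p. F (p, z) \<partial>(lborel \<Otimes>\<^sub>M lborel))" for z
  proof -
    have kf: "integrable lborel (\<lambda>x. k x z * f x)"
      by (rule Bochner_Integration.integrable_bound[OF f])
         (auto simp: abs_mult k_nonneg k_le_1 intro!: mult_left_le_one_le)
    have "(\<integral>p. F (p, z) \<partial>(lborel \<Otimes>\<^sub>M lborel)) = (\<integral>x. k x z * f x \<partial>lborel) * (\<integral>x. k x z * f x \<partial>lborel)"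
      unfolding F_def using lborel_pair.integrable_product(2)[OF kf kf] by (simp add: mult_ac)
    then show ?thesis by simp
  qed
  show ?thesis
    using P.Fubini_integral_nonneg[OF F G] nonneg by simp
qed

lemma ennreal_two_mult_le_sq_add_sq: "2 * (u * v) \<le> u * u + v * (v :: ennreal)"
proof (cases u v rule: ennreal2_cases)
  case (real_real a b)
  then have "ennreal (2 * (a * b)) \<le> ennreal (a * a + b * b)"
    using sum_squares_bound[of a b] by (intro ennreal_leI) (simp add: power2_eq_square mult.assoc)
  with real_real show ?thesis
    by (simp add: ennreal_mult)
qed (auto simp: top_unique)

lemma nn_integral_product_kernel:
  fixes \<kappa> :: "'a::euclidean_space \<Rightarrow> 'b \<Rightarrow> ennreal"
  assumes M: "sigma_finite_measure M"
    and [measurable]: "case_prod \<kappa> \<in> borel_measurable (lborel \<Otimes>\<^sub>M M)"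
      "a \<in> borel_measurable lborel" "b \<in> borel_measurable lborel"
  shows "(\<integral>\<^sup>+ p. (\<integral>\<^sup>+ \<omega>. \<kappa> (fst p) \<omega> * \<kappa> (snd p) \<omega> \<partial>M) * a (fst p) * b (snd p) \<partial>(lborel \<Otimes>\<^sub>M lborel))
    = (\<integral>\<^sup>+ \<omega>. (\<integral>\<^sup>+ x. \<kappa> x \<omega> * a x \<partial>lborel) * (\<integral>\<^sup>+ y. \<kappa> y \<omega> * b y \<partial>lborel) \<partial>M)"
proof -
  interpret P: pair_sigma_finite "lborel \<Otimes>\<^sub>M lborel :: ('a \<times> 'a) measure" M
    unfolding pair_sigma_finite_def lborel_prod using M by (auto intro: sigma_finite_lborel)
  have "(\<integral>\<^sup>+ \<omega>. \<kappa> x \<omega> * \<kappa> y \<omega> \<partial>M) * a x * b y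
      = (\<integral>\<^sup>+ \<omega>. (\<kappa> x \<omega> * a x) * (\<kappa> y \<omega> * b y) \<partial>M)" for x y
  proof -
    have "(\<integral>\<^sup>+ \<omega>. (\<kappa> x \<omega> * a x) * (\<kappa> y \<omega> * b y) \<partial>M) = (\<integral>\<^sup>+ \<omega>. (\<kappa> x \<omega> * \<kappa> y \<omega>) * (a x * b y) \<partial>M)"
      by (simp add: mult_ac)
    also have "\<dots> = (\<integral>\<^sup>+ \<omega>. \<kappa> x \<omega> * \<kappa> y \<omega> \<partial>M) * (a x * b y)"
      by (rule nn_integral_multc) measurable
    finally show ?thesis
      by (simp add: mult.assoc)
  qed
  then have "(\<integral>\<^sup>+ p. (\<integral>\<^sup>+ \<omega>. \<kappa> (fst p) \<omega> * \<kappa> (snd p) \<omega> \<partial>M) * a (fst p) * b (snd p) \<partial>(lborel \<Otimes>\<^sub>M lborel))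
      = (\<integral>\<^sup>+ p. \<integral>\<^sup>+ \<omega>. (\<kappa> (fst p) \<omega> * a (fst p)) * (\<kappa> (snd p) \<omega> * b (snd p)) \<partial>M \<partial>(lborel \<Otimes>\<^sub>M lborel))"
    by simp
  also have "\<dots> = (\<integral>\<^sup>+ \<omega>. \<integral>\<^sup>+ p. (\<kappa> (fst p) \<omega> * a (fst p)) * (\<kappa> (snd p) \<omega> * b (snd p)) \<partial>(lborel \<Otimes>\<^sub>M lborel) \<partial>M)"
    by (rule P.Fubini'[symmetric]) measurable
  also have "\<dots> = (\<integral>\<^sup>+ \<omega>. (\<integral>\<^sup>+ x. \<kappa> x \<omega> * a x \<partial>lborel) * (\<integral>\<^sup>+ y. \<kappa> y \<omega> * b y \<partial>lborel) \<partial>M)"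
    by (intro nn_integral_cong lborel_pair.nn_integral_product) measurable
  finally show ?thesis .
qed

lemma product_kernel_AM_GM:
  fixes \<kappa> :: "'a::euclidean_space \<Rightarrow> 'b \<Rightarrow> ennreal"
  assumes M: "sigma_finite_measure M"
    and \<kappa>[measurable]: "case_prod \<kappa> \<in> borel_measurable (lborel \<Otimes>\<^sub>M M)"
    and a[measurable]: "a \<in> borel_measurable lborel" and b[measurable]: "b \<in> borel_measurable lborel"
  defines "K x y \<equiv> \<integral>\<^sup>+ \<omega>. \<kappa> x \<omega> * \<kappa> y \<omega> \<partial>M"
  shows "2 * (\<integral>\<^sup>+ p. K (fst p) (snd p) * a (fst p) * b (snd p) \<partial>(lborel \<Otimes>\<^sub>M lborel))
    \<le> (\<integral>\<^sup>+ p. K (fst p) (snd p) * a (fst p) * a (snd p) \<partial>(lborel \<Otimes>\<^sub>M lborel))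
      + (\<integral>\<^sup>+ p. K (fst p) (snd p) * b (fst p) * b (snd p) \<partial>(lborel \<Otimes>\<^sub>M lborel))"
proof -
  define A where "A \<omega> = (\<integral>\<^sup>+ x. \<kappa> x \<omega> * a x \<partial>lborel)" for \<omega>
  define B where "B \<omega> = (\<integral>\<^sup>+ x. \<kappa> x \<omega> * b x \<partial>lborel)" for \<omega>
  have [measurable]: "A \<in> borel_measurable M" "B \<in> borel_measurable M"
    unfolding A_def B_def by measurable
  have AB: "(\<integral>\<^sup>+ p. K (fst p) (snd p) * c (fst p) * d (snd p) \<partial>(lborel \<Otimes>\<^sub>M lborel))
      = (\<integral>\<^sup>+ \<omega>. (\<integral>\<^sup>+ x. \<kappa> x \<omega> * c x \<partial>lborel) * (\<integral>\<^sup>+ x. \<kappa> x \<omega> * d x \<partial>lborel) \<partial>M)"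
    if "c \<in> borel_measurable lborel" "d \<in> borel_measurable lborel" for c d
    unfolding K_def by (rule nn_integral_product_kernel[OF M \<kappa> that])
  have "2 * (\<integral>\<^sup>+ p. K (fst p) (snd p) * a (fst p) * b (snd p) \<partial>(lborel \<Otimes>\<^sub>M lborel))
      = (\<integral>\<^sup>+ \<omega>. 2 * (A \<omega> * B \<omega>) \<partial>M)"
    unfolding AB[OF a b] A_def[symmetric] B_def[symmetric] by (rule nn_integral_cmult[symmetric]) measurable
  also have "\<dots> \<le> (\<integral>\<^sup>+ \<omega>. A \<omega> * A \<omega> + B \<omega> * B \<omega> \<partial>M)"
    by (intro nn_integral_mono ennreal_two_mult_le_sq_add_sq)
  also have "\<dots> = (\<integral>\<^sup>+ \<omega>. A \<omega> * A \<omega> \<partial>M) + (\<integral>\<^sup>+ \<omega>. B \<omega> * B \<omega> \<partial>M)"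
    by (rule nn_integral_add) measurable
  also have "\<dots> = (\<integral>\<^sup>+ p. K (fst p) (snd p) * a (fst p) * a (snd p) \<partial>(lborel \<Otimes>\<^sub>M lborel))
      + (\<integral>\<^sup>+ p. K (fst p) (snd p) * b (fst p) * b (snd p) \<partial>(lborel \<Otimes>\<^sub>M lborel))"
    unfolding AB[OF a a] AB[OF b b] A_def B_def ..
  finally show ?thesis .
qed

lemma gaussian_kernel_nonneg:
  fixes f :: "'a::euclidean_space \<Rightarrow> real"
  assumes f: "integrable lborel f" and t: "0 < t"
  shows "0 \<le> (\<integral>p. exp (- t * (norm (fst p - snd p))\<^sup>2) * (f (fst p) * f (snd p)) \<partial>(lborel \<Otimes>\<^sub>M lborel))"
proof -
  define c where "c = sqrt (pi / (4 * t)) ^ DIM('a)"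
  have c: "0 < c"
    using t by (simp add: c_def)
  have "0 \<le> (\<integral>p. (exp (- t * (norm (fst p - snd p))\<^sup>2) * c) * (f (fst p) * f (snd p)) \<partial>(lborel \<Otimes>\<^sub>M lborel))"
    by (rule product_kernel_nonneg[where k = "\<lambda>x z. exp (- 2 * t * (norm (x - z))\<^sup>2)" and C = c, OF f])
       (use t has_bochner_integral_gaussian_product in \<open>auto simp: c_def\<close>)
  also have "\<dots> = c * (\<integral>p. exp (- t * (norm (fst p - snd p))\<^sup>2) * (f (fst p) * f (snd p)) \<partial>(lborel \<Otimes>\<^sub>M lborel))"
    by (simp add: mult_ac)
  finally show ?thesis
    using c by (simp add: zero_le_mult_iff)
qed

lemma integrable_log_integrand_pairing:
  fixes g :: "'a::euclidean_space \<times> 'a \<Rightarrow> real"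
  assumes [measurable]: "g \<in> borel_measurable (lborel \<Otimes>\<^sub>M lborel)"
    and g: "integrable (lborel \<Otimes>\<^sub>M lborel) (\<lambda>p. ln (norm (fst p - snd p)) * g p)"
  shows "integrable ((lborel \<Otimes>\<^sub>M lborel) \<Otimes>\<^sub>M lborel)
    (\<lambda>q. log_integrand (norm (fst (fst q) - snd (fst q))) (snd q) * g (fst q))"
proof (rule integrableI_bounded)
  have "(\<integral>\<^sup>+ q. ennreal (norm (log_integrand (norm (fst (fst q) - snd (fst q))) (snd q) * g (fst q)))
      \<partial>((lborel \<Otimes>\<^sub>M lborel) \<Otimes>\<^sub>M lborel))
      = (\<integral>\<^sup>+ p. \<integral>\<^sup>+ t. ennreal \<bar>log_integrand (norm (fst p - snd p)) t\<bar> * ennreal \<bar>g p\<bar> \<partial>lborel \<partial>(lborel \<Otimes>\<^sub>M lborel))"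
    by (subst lborel.nn_integral_fst[symmetric]) (auto simp: abs_mult ennreal_mult)
  also have "\<dots> = (\<integral>\<^sup>+ p. ennreal (norm (ln (norm (fst p - snd p)) * g p)) \<partial>(lborel \<Otimes>\<^sub>M lborel))"
    using AE_lborel_pair_neq
    by (intro nn_integral_cong_AE, eventually_elim)
       (simp add: nn_integral_multc nn_integral_abs_log_integrand abs_mult ennreal_mult)
  also have "\<dots> < \<infinity>"
    using g by (simp add: integrable_iff_bounded)
  finally show "(\<integral>\<^sup>+ q. ennreal (norm (log_integrand (norm (fst (fst q) - snd (fst q))) (snd q) * g (fst q)))
      \<partial>((lborel \<Otimes>\<^sub>M lborel) \<Otimes>\<^sub>M lborel)) < \<infinity>" .
qed measurable

text \<open>Writing \<open>ln |x - y|\<close> as an integral of Gaussians in \<open>|x - y|\<close> (Frullani), the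
  condition \<open>\<integral> f = 0\<close> kills the constant part and what remains is minus a
  superposition of positive semidefinite Gaussian kernels.\<close>
lemma log_kernel_nonpos:
  fixes f :: "'a::euclidean_space \<Rightarrow> real"
  assumes f: "integrable lborel f" and f0: "(\<integral>x. f x \<partial>lborel) = 0"
    and E: "integrable (lborel \<Otimes>\<^sub>M lborel) (\<lambda>p. ln (norm (fst p - snd p)) * (f (fst p) * f (snd p)))"
  shows "(\<integral>p. ln (norm (fst p - snd p)) * (f (fst p) * f (snd p)) \<partial>(lborel \<Otimes>\<^sub>M lborel)) \<le> 0"
proof -
  interpret P: pair_sigma_finite "lborel \<Otimes>\<^sub>M lborel :: ('a \<times> 'a) measure" "lborel :: real measure"
    unfolding pair_sigma_finite_def lborel_prod by (auto intro: sigma_finite_lborel)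
  have [measurable]: "f \<in> borel_measurable lborel"
    using f by auto
  define \<Phi> where "\<Phi> q = - log_integrand (norm (fst (fst q) - snd (fst q))) (snd q) * (f (fst (fst q)) * f (snd (fst q)))"
    for q :: "('a \<times> 'a) \<times> real"
  have \<Phi>: "integrable ((lborel \<Otimes>\<^sub>M lborel) \<Otimes>\<^sub>M lborel) \<Phi>"
    unfolding \<Phi>_def mult_minus_left
    by (intro integrable_minus integrable_log_integrand_pairing[OF _ E]) measurable
  have "AE p in lborel \<Otimes>\<^sub>M lborel.
      (\<integral>t. \<Phi> (p, t) \<partial>lborel) = - (ln (norm (fst p - snd p)) * (f (fst p) * f (snd p)))"
    using AE_lborel_pair_neq
    by eventually_elim (simp add: \<Phi>_def has_bochner_integral_integral_eq[OF has_bochner_integral_log_integrand])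
  moreover have "0 \<le> (\<integral>p. \<Phi> (p, t) \<partial>(lborel \<Otimes>\<^sub>M lborel))" for t
  proof (cases "0 < t")
    case True
    have ff: "integrable (lborel \<Otimes>\<^sub>M lborel) (\<lambda>p. f (fst p) * f (snd p))"
      and ff0: "(\<integral>p. f (fst p) * f (snd p) \<partial>(lborel \<Otimes>\<^sub>M lborel)) = 0"
      using lborel_pair.integrable_product[OF f f] f0 by auto
    have gauss: "integrable (lborel \<Otimes>\<^sub>M lborel) (\<lambda>p. exp (- t * (norm (fst p - snd p))\<^sup>2) * (f (fst p) * f (snd p)))"
      by (rule Bochner_Integration.integrable_bound[OF ff])
         (use True in \<open>auto simp: abs_mult intro!: mult_left_le_one_le\<close>)
    have "(\<lambda>p. \<Phi> (p, t)) = (\<lambda>p. (1 / (2 * t)) * (exp (- t * (norm (fst p - snd p))\<^sup>2) * (f (fst p) * f (snd p)))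
        - (exp (- t) / (2 * t)) * (f (fst p) * f (snd p)))"
      using True by (auto simp: \<Phi>_def log_integrand_def field_simps)
    then have "(\<integral>p. \<Phi> (p, t) \<partial>(lborel \<Otimes>\<^sub>M lborel))
        = (1 / (2 * t)) * (\<integral>p. exp (- t * (norm (fst p - snd p))\<^sup>2) * (f (fst p) * f (snd p)) \<partial>(lborel \<Otimes>\<^sub>M lborel))"
      using ff gauss ff0 by simp
    then show ?thesis
      using True gaussian_kernel_nonneg[OF f True] by simp
  next
    case False
    then have "\<Phi> (p, t) = 0" for p
      by (auto simp: \<Phi>_def log_integrand_def)
    then show ?thesis by simp
  qed
  ultimately have "0 \<le> (\<integral>p. - (ln (norm (fst p - snd p)) * (f (fst p) * f (snd p))) \<partial>(lborel \<Otimes>\<^sub>M lborel))"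
    by (intro P.Fubini_integral_nonneg[OF \<Phi>]) auto
  then show ?thesis by simp
qed

section \<open>Finiteness of mutual logarithmic energies\<close>

definition log_energy :: "('a::euclidean_space \<Rightarrow> real) \<Rightarrow> ('a \<Rightarrow> real) \<Rightarrow> ennreal" where
  "log_energy \<rho>1 \<rho>2 = (\<integral>\<^sup>+ p. ennreal (\<bar>ln (norm (fst p - snd p))\<bar> * \<rho>1 (fst p) * \<rho>2 (snd p)) \<partial>(lborel \<Otimes>\<^sub>M lborel))"

definition finite_log_energy_density :: "('a::euclidean_space \<Rightarrow> real) \<Rightarrow> bool" where
  "finite_log_energy_density \<rho> \<longleftrightarrow> \<rho> \<in> borel_measurable lborel \<and> (\<forall>x. 0 \<le> \<rho> x) \<and>
     (\<integral>\<^sup>+ x. ennreal (\<rho> x) \<partial>lborel) = 1 \<and> log_energy \<rho> \<rho> < \<infinity>"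

text \<open>The part \<open>t \<ge> 1\<close> of the Frullani integral
  \<open>- ln r = \<integral>\<^sub>0\<^sup>\<infinity> (exp (- t r\<^sup>2) - exp (- t)) / (2 t) dt\<close>: it carries the singularity of \<open>ln\<close>
  at \<open>0\<close>, and it is a superposition of Gaussian kernels, hence positive definite.\<close>
definition tail_kernel :: "'a::euclidean_space \<Rightarrow> 'a \<Rightarrow> ennreal" where
  "tail_kernel x y = (\<integral>\<^sup>+ t. ennreal (exp (- t * (norm (x - y))\<^sup>2) / (2 * t)) * indicator {1..} t \<partial>lborel)"

lemma tail_kernel_measurable[measurable]:
  assumes [measurable]: "f \<in> borel_measurable M" "g \<in> borel_measurable M"
  shows "(\<lambda>x. tail_kernel (f x) (g x)) \<in> borel_measurable M"
  unfolding tail_kernel_def by measurable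

lemma nn_integral_inverse_square_atLeast_1:
  "(\<integral>\<^sup>+ t. ennreal (1 / (2 * t\<^sup>2)) * indicator {1..} t \<partial>lborel) = ennreal (1 / 2)"
proof -
  have "(\<integral>\<^sup>+ t. ennreal (1 / (2 * t\<^sup>2)) * indicator {1..} t \<partial>lborel) = ennreal (0 - (- 1 / (2 * 1)))"
  proof (rule nn_integral_FTC_atLeast[where F = "\<lambda>t. - 1 / (2 * t)"])
    fix x :: real assume "1 \<le> x"
    then show "DERIV (\<lambda>t. - 1 / (2 * t)) x :> 1 / (2 * x\<^sup>2)"
      by (auto intro!: derivative_eq_intros simp: field_simps power2_eq_square)
  next
    show "((\<lambda>t::real. - 1 / (2 * t)) \<longlongrightarrow> 0) at_top"
      by real_asymp
  qed auto
  then show ?thesis by simp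
qed

lemma tail_kernel_le:
  fixes x y :: "'a::euclidean_space" assumes "x \<noteq> y"
  shows "tail_kernel x y \<le> ennreal (\<bar>ln (norm (x - y))\<bar> + 1 / 2)"
proof -
  define r where "r = norm (x - y)"
  have r: "0 < r"
    using assms by (simp add: r_def)
  have "exp (- t * r\<^sup>2) / (2 * t) \<le> \<bar>log_integrand r t\<bar> + 1 / (2 * t\<^sup>2)" if "1 \<le> t" for t
  proof -
    have "t \<le> exp t"
      using exp_ge_add_one_self[of t] by linarith
    then have "exp (- t) * t \<le> 1"
      by (simp add: exp_minus field_simps)
    then have "exp (- t) / (2 * t) \<le> 1 / (2 * t\<^sup>2)"
      using that by (simp add: field_simps power2_eq_square)
    moreover have "exp (- t * r\<^sup>2) / (2 * t) \<le> \<bar>log_integrand r t\<bar> + exp (- t) / (2 * t)"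
      using that by (simp add: log_integrand_def add_divide_distrib[symmetric] divide_right_mono)
    ultimately show ?thesis by linarith
  qed
  then have "tail_kernel x y \<le> (\<integral>\<^sup>+ t. ennreal \<bar>log_integrand r t\<bar> + ennreal (1 / (2 * t\<^sup>2)) * indicator {1..} t \<partial>lborel)"
    unfolding tail_kernel_def r_def[symmetric]
    by (intro nn_integral_mono) (simp add: indicator_def ennreal_leI flip: ennreal_plus)
  also have "\<dots> = ennreal (\<bar>ln r\<bar> + 1 / 2)"
    by (simp add: nn_integral_add nn_integral_abs_log_integrand[OF r] nn_integral_inverse_square_atLeast_1)
  finally show ?thesis by (simp add: r_def)
qed

lemma ln_norm_diff_le:
  fixes x y :: "'a::real_normed_vector" assumes "x \<noteq> y"
  shows "ln (norm (x - y)) \<le> ln (1 + norm x) + ln (1 + norm y)"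
proof -
  have "norm (x - y) \<le> norm x + norm y"
    by (rule norm_triangle_ineq4)
  also have "\<dots> \<le> (1 + norm x) * (1 + norm y)"
    by (simp add: algebra_simps)
  finally have "ln (norm (x - y)) \<le> ln ((1 + norm x) * (1 + norm y))"
    using assms by (intro ln_mono) auto
  also have "1 + norm x \<noteq> 0" "1 + norm y \<noteq> 0"
    using norm_ge_zero[of x] norm_ge_zero[of y] by linarith+
  then have "ln ((1 + norm x) * (1 + norm y)) = ln (1 + norm x) + ln (1 + norm y)"
    by (simp add: ln_mult)
  finally show ?thesis .
qed

lemma abs_ln_le_half_plus_tail_kernel:
  fixes x y :: "'a::euclidean_space" assumes "x \<noteq> y" and "norm (x - y) < 1"
  shows "ennreal \<bar>ln (norm (x - y))\<bar> \<le> ennreal (1 / 2) + tail_kernel x y"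
proof -
  define r where "r = norm (x - y)"
  have r: "0 < r" "r < 1"
    using assms by (simp_all add: r_def)
  have "ennreal \<bar>ln r\<bar> = (\<integral>\<^sup>+ t. ennreal \<bar>log_integrand r t\<bar> \<partial>lborel)"
    by (simp add: nn_integral_abs_log_integrand r)
  also have "\<dots> \<le> (\<integral>\<^sup>+ t. ennreal (indicator {0..1} t / 2 + indicator {1..} t * (exp (- t * r\<^sup>2) / (2 * t))) \<partial>lborel)"
    by (intro nn_integral_mono ennreal_leI abs_log_integrand_le r)
  also have "\<dots> = (\<integral>\<^sup>+ t. ennreal (1 / 2) * indicator {0..1} t
      + ennreal (exp (- t * r\<^sup>2) / (2 * t)) * indicator {1..} t \<partial>lborel)"
    by (intro nn_integral_cong) (auto simp: indicator_def)
  also have "\<dots> = ennreal (1 / 2) + tail_kernel x y"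
    by (subst nn_integral_add) (auto simp: tail_kernel_def r_def nn_integral_cmult_indicator)
  finally show ?thesis
    by (simp add: r_def)
qed

lemma abs_log_le_tail_kernel:
  fixes x y :: "'a::euclidean_space" assumes "x \<noteq> y"
  shows "ennreal \<bar>ln (norm (x - y))\<bar>
    \<le> ennreal ((1 + ln (1 + norm x)) * (1 + ln (1 + norm y))) + tail_kernel x y"
proof -
  define r where "r = norm (x - y)"
  have l: "0 \<le> ln (1 + norm x)" "0 \<le> ln (1 + norm y)"
    by simp_all
  have weight: "1 + ln (1 + norm x) + ln (1 + norm y) \<le> (1 + ln (1 + norm x)) * (1 + ln (1 + norm y))"
    using mult_nonneg_nonneg[OF l] by (simp add: algebra_simps)
  show ?thesis
  proof (cases "1 \<le> r")
    case True
    have "ln r \<le> ln (1 + norm x) + ln (1 + norm y)"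
      using ln_norm_diff_le[OF assms] by (simp add: r_def)
    then have "ennreal \<bar>ln r\<bar> \<le> ennreal ((1 + ln (1 + norm x)) * (1 + ln (1 + norm y)))"
      using True weight by (intro ennreal_leI) simp
    then show ?thesis
      unfolding r_def by (rule add_increasing2[OF zero_le])
  next
    case False
    then have "ennreal \<bar>ln r\<bar> \<le> ennreal (1 / 2) + tail_kernel x y"
      using abs_ln_le_half_plus_tail_kernel[OF assms] by (simp add: r_def)
    also have "\<dots> \<le> ennreal ((1 + ln (1 + norm x)) * (1 + ln (1 + norm y))) + tail_kernel x y"
    proof -
      have "1 / 2 \<le> (1 + ln (1 + norm x)) * (1 + ln (1 + norm y))"
        using weight l by linarith
      then show ?thesis
        by (intro add_mono ennreal_leI) auto
    qed
    finally show ?thesis by (simp add: r_def)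
  qed
qed

definition tail_feature :: "'a::euclidean_space \<Rightarrow> real \<times> 'a \<Rightarrow> ennreal" where
  "tail_feature x \<omega> = indicator {1..} (fst \<omega>) * ennreal (exp (- 2 * fst \<omega> * (norm (x - snd \<omega>))\<^sup>2)
     / sqrt (2 * fst \<omega> * sqrt (pi / (4 * fst \<omega>)) ^ DIM('a)))"

lemma tail_kernel_eq_nn_integral_tail_feature:
  fixes x y :: "'a::euclidean_space"
  shows "tail_kernel x y = (\<integral>\<^sup>+ \<omega>. tail_feature x \<omega> * tail_feature y \<omega> \<partial>(lborel \<Otimes>\<^sub>M lborel))"
proof -
  have "(\<integral>\<^sup>+ z. tail_feature x (t, z) * tail_feature y (t, z) \<partial>lborel)
      = ennreal (exp (- t * (norm (x - y))\<^sup>2) / (2 * t)) * indicator {1..} t" for t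
  proof (cases "1 \<le> t")
    case True
    define c where "c = sqrt (pi / (4 * t)) ^ DIM('a)"
    have c: "0 < c"
      using True by (simp add: c_def)
    have "tail_feature x (t, z) * tail_feature y (t, z)
        = ennreal (1 / (2 * t * c)) * ennreal (exp (- 2 * t * (norm (x - z))\<^sup>2) * exp (- 2 * t * (norm (y - z))\<^sup>2))" for z
      using True c by (simp add: tail_feature_def c_def ennreal_mult'[symmetric] divide_simps)
    then have "(\<integral>\<^sup>+ z. tail_feature x (t, z) * tail_feature y (t, z) \<partial>lborel)
        = ennreal (1 / (2 * t * c)) * ennreal (exp (- t * (norm (x - y))\<^sup>2) * c)"
      using True has_bochner_integral_gaussian_product[of t x y]
      by (simp add: nn_integral_cmult c_def has_bochner_integral_iff nn_integral_eq_integral)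
    also have "\<dots> = ennreal (exp (- t * (norm (x - y))\<^sup>2) / (2 * t)) * indicator {1..} t"
      using True c by (simp add: ennreal_mult'[symmetric])
    finally show ?thesis .
  qed (simp add: tail_feature_def)
  then show ?thesis
    unfolding tail_kernel_def by (subst lborel.nn_integral_fst[symmetric]) (auto simp: tail_feature_def)
qed

lemma tail_kernel_AM_GM:
  fixes a b :: "'a::euclidean_space \<Rightarrow> ennreal"
  assumes [measurable]: "a \<in> borel_measurable lborel" "b \<in> borel_measurable lborel"
  shows "2 * (\<integral>\<^sup>+ p. tail_kernel (fst p) (snd p) * a (fst p) * b (snd p) \<partial>(lborel \<Otimes>\<^sub>M lborel))
    \<le> (\<integral>\<^sup>+ p. tail_kernel (fst p) (snd p) * a (fst p) * a (snd p) \<partial>(lborel \<Otimes>\<^sub>M lborel))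
      + (\<integral>\<^sup>+ p. tail_kernel (fst p) (snd p) * b (fst p) * b (snd p) \<partial>(lborel \<Otimes>\<^sub>M lborel))"
  unfolding tail_kernel_eq_nn_integral_tail_feature
proof (rule product_kernel_AM_GM)
  show "sigma_finite_measure (lborel \<Otimes>\<^sub>M lborel :: (real \<times> 'a) measure)"
    unfolding lborel_prod by (rule sigma_finite_lborel)
  show "case_prod tail_feature \<in> borel_measurable (lborel \<Otimes>\<^sub>M (lborel \<Otimes>\<^sub>M lborel))"
    unfolding tail_feature_def by measurable
qed fact+

lemma ln_one_plus_norm_le:
  fixes x y :: "'a::real_normed_vector" assumes y: "norm y < R"
  shows "ln (1 + norm x) \<le> ln (1 + R) + ln 2 + \<bar>ln (norm (x - y))\<bar>"
proof -
  define d where "d = norm (x - y)"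
  have R: "0 \<le> R"
    using y norm_ge_zero[of y] by linarith
  have "1 + norm x \<le> 1 + R + d + R * d"
    using norm_triangle_ineq[of "x - y" y] y mult_nonneg_nonneg[OF R, of d] by (simp add: d_def)
  also have "\<dots> = (1 + R) * (1 + d)"
    by (simp add: algebra_simps)
  finally have "ln (1 + norm x) \<le> ln ((1 + R) * (1 + d))"
    by (rule ln_mono) (simp add: add_pos_nonneg)
  also have "\<dots> = ln (1 + R) + ln (1 + d)"
    using R by (simp add: d_def ln_mult add_nonneg_eq_0_iff)
  finally have "ln (1 + norm x) \<le> ln (1 + R) + ln (1 + d)" .
  moreover have "ln (1 + d) \<le> ln 2 + \<bar>ln d\<bar>"
  proof (cases "d \<le> 1")
    case True
    then have "ln (1 + d) \<le> ln 2"
      by (simp add: d_def add_pos_nonneg)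
    then show ?thesis
      by simp
  next
    case False
    then have "ln (1 + d) \<le> ln (2 * d)"
      by simp
    then show ?thesis
      using False by (simp add: ln_mult)
  qed
  ultimately show ?thesis
    by (simp add: d_def)
qed

lemma nn_integral_ball_nonzero:
  fixes f :: "'a::euclidean_space \<Rightarrow> ennreal"
  assumes [measurable]: "f \<in> borel_measurable lborel" and "(\<integral>\<^sup>+ x. f x \<partial>lborel) \<noteq> 0"
  obtains n :: nat where "(\<integral>\<^sup>+ x. f x * indicator (ball 0 (real n)) x \<partial>lborel) \<noteq> 0"
proof (rule ccontr)
  have [measurable]: "ball 0 r \<in> sets borel" for r :: real
    by simp
  assume "\<not> thesis"
  with that have "\<forall>n::nat. AE x in lborel. f x * indicator (ball 0 (real n)) x = 0"
    by (subst (asm) nn_integral_0_iff_AE) auto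
  then have "AE x in lborel. \<forall>n::nat. f x * indicator (ball 0 (real n)) x = 0"
    by (rule AE_all_countable[THEN iffD2])
  then have "AE x in lborel. f x = 0"
  proof eventually_elim
    case (elim x)
    obtain n :: nat where "norm x < real n"
      using reals_Archimedean2 by blast
    then show ?case
      using elim[rule_format, of n] by simp
  qed
  then show False
    using assms(2) by (simp add: nn_integral_0_iff_AE)
qed

lemma ball_mass_mult_ln_le:
  fixes \<rho> :: "'a::euclidean_space \<Rightarrow> real"
  assumes [measurable]: "\<rho> \<in> borel_measurable lborel" and nonneg: "\<And>x. 0 \<le> \<rho> x"
    and mass: "(\<integral>\<^sup>+ x. ennreal (\<rho> x) \<partial>lborel) = 1"
  shows "(\<integral>\<^sup>+ y. ennreal (\<rho> y) * indicator (ball 0 (real n)) y \<partial>lborel) * ennreal (ln (1 + norm x))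
    \<le> ennreal (ln (1 + real n) + ln 2) + (\<integral>\<^sup>+ y. ennreal (\<bar>ln (norm (x - y))\<bar> * \<rho> y) \<partial>lborel)"
proof -
  define C where "C = ln (1 + real n) + ln 2"
  have [measurable]: "ball 0 r \<in> sets borel" for r :: real
    by simp
  have "(\<integral>\<^sup>+ y. ennreal (\<rho> y) * indicator (ball 0 (real n)) y \<partial>lborel) * ennreal (ln (1 + norm x))
      = (\<integral>\<^sup>+ y. ennreal (\<rho> y) * indicator (ball 0 (real n)) y * ennreal (ln (1 + norm x)) \<partial>lborel)"
    by (rule nn_integral_multc[symmetric]) measurable
  also have "\<dots> \<le> (\<integral>\<^sup>+ y. ennreal C * ennreal (\<rho> y) + ennreal (\<bar>ln (norm (x - y))\<bar> * \<rho> y) \<partial>lborel)"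
  proof (intro nn_integral_mono)
    fix y :: 'a
    have "\<rho> y * ln (1 + norm x) \<le> \<rho> y * (C + \<bar>ln (norm (x - y))\<bar>)" if "norm y < real n"
      using ln_one_plus_norm_le[OF that, of x] nonneg[of y] unfolding C_def
      by (intro mult_left_mono) auto
    then show "ennreal (\<rho> y) * indicator (ball 0 (real n)) y * ennreal (ln (1 + norm x))
        \<le> ennreal C * ennreal (\<rho> y) + ennreal (\<bar>ln (norm (x - y))\<bar> * \<rho> y)"
      using nonneg[of y] by (auto simp: C_def indicator_def algebra_simps ennreal_leI
          simp flip: ennreal_mult ennreal_plus)
  qed
  also have "\<dots> = ennreal C + (\<integral>\<^sup>+ y. ennreal (\<bar>ln (norm (x - y))\<bar> * \<rho> y) \<partial>lborel)"
    using mass by (subst nn_integral_add) (auto simp: nn_integral_cmult)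
  finally show ?thesis
    by (simp add: C_def)
qed

text \<open>Weighting with the mass of \<open>\<rho>\<close> in a ball, the logarithmic moment is bounded by the energy.\<close>
lemma log_moment_finite:
  fixes \<rho> :: "'a::euclidean_space \<Rightarrow> real"
  assumes "finite_log_energy_density \<rho>"
  shows "(\<integral>\<^sup>+ x. ennreal ((1 + ln (1 + norm x)) * \<rho> x) \<partial>lborel) < \<infinity>"
proof -
  have [measurable]: "\<rho> \<in> borel_measurable lborel" and nonneg: "\<And>x. 0 \<le> \<rho> x"
    and mass: "(\<integral>\<^sup>+ x. ennreal (\<rho> x) \<partial>lborel) = 1" and energy: "log_energy \<rho> \<rho> < \<infinity>"
    using assms by (auto simp: finite_log_energy_density_def)
  obtain n :: nat where m: "(\<integral>\<^sup>+ y. ennreal (\<rho> y) * indicator (ball 0 (real n)) y \<partial>lborel) \<noteq> 0"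
    using nn_integral_ball_nonzero[of "\<lambda>y. ennreal (\<rho> y)"] mass by auto
  define m where "m = (\<integral>\<^sup>+ y. ennreal (\<rho> y) * indicator (ball 0 (real n)) y \<partial>lborel)"
  define C where "C = ln (1 + real n) + ln 2"
  have "m * (\<integral>\<^sup>+ x. ennreal (ln (1 + norm x) * \<rho> x) \<partial>lborel)
      = (\<integral>\<^sup>+ x. ennreal (\<rho> x) * (m * ennreal (ln (1 + norm x))) \<partial>lborel)"
    by (subst nn_integral_cmult[symmetric], measurable)
      (auto intro!: nn_integral_cong simp: nonneg ennreal_mult'' mult_ac)
  also have "\<dots> \<le> (\<integral>\<^sup>+ x. ennreal (\<rho> x) * (ennreal C + (\<integral>\<^sup>+ y. ennreal (\<bar>ln (norm (x - y))\<bar> * \<rho> y) \<partial>lborel)) \<partial>lborel)"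
    unfolding m_def C_def
    by (intro nn_integral_mono mult_left_mono ball_mass_mult_ln_le nonneg mass) auto
  also have "\<dots> = (\<integral>\<^sup>+ x. ennreal (\<rho> x) * ennreal C \<partial>lborel)
      + (\<integral>\<^sup>+ x. ennreal (\<rho> x) * (\<integral>\<^sup>+ y. ennreal (\<bar>ln (norm (x - y))\<bar> * \<rho> y) \<partial>lborel) \<partial>lborel)"
    unfolding distrib_left by (rule nn_integral_add) measurable
  also have "(\<integral>\<^sup>+ x. ennreal (\<rho> x) * (\<integral>\<^sup>+ y. ennreal (\<bar>ln (norm (x - y))\<bar> * \<rho> y) \<partial>lborel) \<partial>lborel)
      = (\<integral>\<^sup>+ x. \<integral>\<^sup>+ y. ennreal (\<bar>ln (norm (x - y))\<bar> * \<rho> x * \<rho> y) \<partial>lborel \<partial>lborel)"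
    by (intro nn_integral_cong, subst nn_integral_cmult[symmetric], measurable)
      (auto intro!: nn_integral_cong simp: nonneg ennreal_mult'' mult_ac)
  also have "\<dots> = log_energy \<rho> \<rho>"
    unfolding log_energy_def by (subst lborel.nn_integral_fst[symmetric]) auto
  also have "(\<integral>\<^sup>+ x. ennreal (\<rho> x) * ennreal C \<partial>lborel) = ennreal C"
    using mass by (simp add: nn_integral_multc)
  finally have "m * (\<integral>\<^sup>+ x. ennreal (ln (1 + norm x) * \<rho> x) \<partial>lborel) \<le> ennreal C + log_energy \<rho> \<rho>" .
  also have "\<dots> < \<infinity>"
    using energy by simp
  finally have "(\<integral>\<^sup>+ x. ennreal (ln (1 + norm x) * \<rho> x) \<partial>lborel) < \<infinity>"
    using m by (auto simp: m_def ennreal_mult_less_top)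
  moreover have "(\<integral>\<^sup>+ x. ennreal ((1 + ln (1 + norm x)) * \<rho> x) \<partial>lborel)
      = (\<integral>\<^sup>+ x. ennreal (\<rho> x) \<partial>lborel) + (\<integral>\<^sup>+ x. ennreal (ln (1 + norm x) * \<rho> x) \<partial>lborel)"
    by (subst nn_integral_add[symmetric]) (auto intro!: nn_integral_cong simp: nonneg distrib_right)
  ultimately show ?thesis
    using mass by simp
qed

lemma tail_energy_finite:
  fixes \<rho> :: "'a::euclidean_space \<Rightarrow> real"
  assumes "finite_log_energy_density \<rho>"
  shows "(\<integral>\<^sup>+ p. tail_kernel (fst p) (snd p) * ennreal (\<rho> (fst p)) * ennreal (\<rho> (snd p)) \<partial>(lborel \<Otimes>\<^sub>M lborel)) < \<infinity>"
proof -
  have [measurable]: "\<rho> \<in> borel_measurable lborel" and nonneg: "\<And>x. 0 \<le> \<rho> x"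
    and mass: "(\<integral>\<^sup>+ x. ennreal (\<rho> x) \<partial>lborel) = 1" and energy: "log_energy \<rho> \<rho> < \<infinity>"
    using assms by (auto simp: finite_log_energy_density_def)
  have "(\<integral>\<^sup>+ p. tail_kernel (fst p) (snd p) * ennreal (\<rho> (fst p)) * ennreal (\<rho> (snd p)) \<partial>(lborel \<Otimes>\<^sub>M lborel))
      \<le> (\<integral>\<^sup>+ p. ennreal (\<bar>ln (norm (fst p - snd p))\<bar> * \<rho> (fst p) * \<rho> (snd p))
          + ennreal (1 / 2) * (ennreal (\<rho> (fst p)) * ennreal (\<rho> (snd p))) \<partial>(lborel \<Otimes>\<^sub>M lborel))"
  proof (intro nn_integral_mono_AE, use AE_lborel_pair_neq in eventually_elim)
    case (elim p)
    have "tail_kernel (fst p) (snd p) * ennreal (\<rho> (fst p)) * ennreal (\<rho> (snd p))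
        \<le> ennreal (\<bar>ln (norm (fst p - snd p))\<bar> + 1 / 2) * ennreal (\<rho> (fst p)) * ennreal (\<rho> (snd p))"
      by (intro mult_right_mono tail_kernel_le elim) auto
    also have "\<dots> = ennreal (\<bar>ln (norm (fst p - snd p))\<bar> * \<rho> (fst p) * \<rho> (snd p))
        + ennreal (1 / 2) * (ennreal (\<rho> (fst p)) * ennreal (\<rho> (snd p)))"
      by (simp add: nonneg ennreal_mult'' distrib_right mult.assoc)
    finally show ?case .
  qed
  also have "\<dots> = log_energy \<rho> \<rho> + ennreal (1 / 2) * (\<integral>\<^sup>+ p. ennreal (\<rho> (fst p)) * ennreal (\<rho> (snd p)) \<partial>(lborel \<Otimes>\<^sub>M lborel))"
    unfolding log_energy_def by (subst nn_integral_add, measurable, subst nn_integral_cmult) auto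
  also have "(\<integral>\<^sup>+ p. ennreal (\<rho> (fst p)) * ennreal (\<rho> (snd p)) \<partial>(lborel \<Otimes>\<^sub>M lborel)) = 1"
    using mass by (subst lborel_pair.nn_integral_product) auto
  also have "log_energy \<rho> \<rho> + ennreal (1 / 2) * 1 < \<infinity>"
    using energy by (simp add: less_top[symmetric])
  finally show ?thesis .
qed

text \<open>The positive part of \<open>ln |x - y|\<close> is controlled by logarithmic moments, the negative part
  by the tail kernel, for which mixed energies are bounded by pure ones (AM-GM).\<close>
lemma mutual_log_energy_finite:
  fixes \<rho>1 \<rho>2 :: "'a::euclidean_space \<Rightarrow> real"
  assumes \<rho>1: "finite_log_energy_density \<rho>1" and \<rho>2: "finite_log_energy_density \<rho>2"
  shows "log_energy \<rho>1 \<rho>2 < \<infinity>"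
proof -
  have [measurable]: "\<rho>1 \<in> borel_measurable lborel" "\<rho>2 \<in> borel_measurable lborel"
    and nonneg: "\<And>x. 0 \<le> \<rho>1 x" "\<And>x. 0 \<le> \<rho>2 x"
    using \<rho>1 \<rho>2 by (auto simp: finite_log_energy_density_def)
  define w where "w x = 1 + ln (1 + norm x)" for x :: 'a
  have w: "0 \<le> w x" for x
    by (simp add: w_def)
  define T where "T = (\<integral>\<^sup>+ p. tail_kernel (fst p) (snd p) * ennreal (\<rho>1 (fst p)) * ennreal (\<rho>2 (snd p))
    \<partial>(lborel \<Otimes>\<^sub>M lborel))"
  have "log_energy \<rho>1 \<rho>2 \<le> (\<integral>\<^sup>+ p. ennreal (w (fst p) * \<rho>1 (fst p)) * ennreal (w (snd p) * \<rho>2 (snd p))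
      + tail_kernel (fst p) (snd p) * ennreal (\<rho>1 (fst p)) * ennreal (\<rho>2 (snd p)) \<partial>(lborel \<Otimes>\<^sub>M lborel))"
    unfolding log_energy_def
  proof (intro nn_integral_mono_AE, use AE_lborel_pair_neq in eventually_elim)
    case (elim p)
    have "ennreal (\<bar>ln (norm (fst p - snd p))\<bar> * \<rho>1 (fst p) * \<rho>2 (snd p))
        = ennreal \<bar>ln (norm (fst p - snd p))\<bar> * ennreal (\<rho>1 (fst p)) * ennreal (\<rho>2 (snd p))"
      by (simp add: nonneg ennreal_mult'')
    also have "\<dots> \<le> (ennreal (w (fst p) * w (snd p)) + tail_kernel (fst p) (snd p))
        * ennreal (\<rho>1 (fst p)) * ennreal (\<rho>2 (snd p))"
      unfolding w_def by (intro mult_right_mono abs_log_le_tail_kernel elim) auto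
    also have "\<dots> = ennreal (w (fst p) * \<rho>1 (fst p)) * ennreal (w (snd p) * \<rho>2 (snd p))
        + tail_kernel (fst p) (snd p) * ennreal (\<rho>1 (fst p)) * ennreal (\<rho>2 (snd p))"
      using w[of "fst p"] w[of "snd p"] by (simp add: distrib_left distrib_right nonneg ennreal_mult'' mult_ac)
    finally show ?case .
  qed
  also have "\<dots> = (\<integral>\<^sup>+ x. ennreal (w x * \<rho>1 x) \<partial>lborel) * (\<integral>\<^sup>+ y. ennreal (w y * \<rho>2 y) \<partial>lborel) + T"
    unfolding T_def w_def
    by (subst nn_integral_add, measurable, subst lborel_pair.nn_integral_product) auto
  also have "\<dots> < \<infinity>"
  proof -
    have "(\<integral>\<^sup>+ x. ennreal (w x * \<rho> x) \<partial>lborel) < \<infinity>" if "finite_log_energy_density \<rho>" for \<rho>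
      using log_moment_finite[OF that] by (simp add: w_def)
    moreover have "2 * T < \<infinity>"
      using tail_kernel_AM_GM[of "\<lambda>x. ennreal (\<rho>1 x)" "\<lambda>x. ennreal (\<rho>2 x)"]
        tail_energy_finite[OF \<rho>1] tail_energy_finite[OF \<rho>2]
      by (simp add: T_def order_le_less_trans)
    ultimately show ?thesis
      using \<rho>1 \<rho>2 by (auto simp: ennreal_mult_less_top)
  qed
  finally show ?thesis .
qed

lemma finite_log_energy_density_has_integral:
  "finite_log_energy_density \<rho> \<Longrightarrow> has_bochner_integral lborel \<rho> 1"
  by (auto simp: finite_log_energy_density_def intro: has_bochner_integral_nn_integral)

lemma integrable_log_energy:
  fixes \<rho>1 \<rho>2 :: "'a::euclidean_space \<Rightarrow> real"
  assumes [measurable]: "\<rho>1 \<in> borel_measurable lborel" "\<rho>2 \<in> borel_measurable lborel"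
    and "\<And>x. 0 \<le> \<rho>1 x" "\<And>x. 0 \<le> \<rho>2 x" and "log_energy \<rho>1 \<rho>2 < \<infinity>"
  shows "integrable (lborel \<Otimes>\<^sub>M lborel) (\<lambda>p. \<bar>ln (norm (fst p - snd p))\<bar> * \<rho>1 (fst p) * \<rho>2 (snd p))"
  using assms by (intro integrableI_nonneg) (auto simp: log_energy_def)

lemma integrable_log_energy_difference:
  fixes \<rho>1 \<rho>2 :: "'a::euclidean_space \<Rightarrow> real"
  assumes \<rho>1: "finite_log_energy_density \<rho>1" and \<rho>2: "finite_log_energy_density \<rho>2"
  shows "integrable (lborel \<Otimes>\<^sub>M lborel)
    (\<lambda>p. ln (norm (fst p - snd p)) * ((\<rho>1 (fst p) - \<rho>2 (fst p)) * (\<rho>1 (snd p) - \<rho>2 (snd p))))"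
proof -
  have [measurable]: "\<rho>1 \<in> borel_measurable lborel" "\<rho>2 \<in> borel_measurable lborel"
    and nonneg: "\<And>x. 0 \<le> \<rho>1 x" "\<And>x. 0 \<le> \<rho>2 x"
    using \<rho>1 \<rho>2 by (auto simp: finite_log_energy_density_def)
  define E where "E \<sigma> \<tau> p = \<bar>ln (norm (fst p - snd p))\<bar> * \<sigma> (fst p) * \<tau> (snd p)"
    for \<sigma> \<tau> :: "'a \<Rightarrow> real" and p
  have E: "integrable (lborel \<Otimes>\<^sub>M lborel) (E \<sigma> \<tau>)"
    if "\<sigma> \<in> {\<rho>1, \<rho>2}" "\<tau> \<in> {\<rho>1, \<rho>2}" for \<sigma> \<tau>
    using that mutual_log_energy_finite[OF \<rho>1 \<rho>2] mutual_log_energy_finite[OF \<rho>2 \<rho>1]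
      mutual_log_energy_finite[OF \<rho>1 \<rho>1] mutual_log_energy_finite[OF \<rho>2 \<rho>2]
    unfolding E_def by (auto intro!: integrable_log_energy simp: nonneg)
  have "integrable (lborel \<Otimes>\<^sub>M lborel) (\<lambda>p. E \<rho>1 \<rho>1 p + E \<rho>1 \<rho>2 p + E \<rho>2 \<rho>1 p + E \<rho>2 \<rho>2 p)"
    by (intro Bochner_Integration.integrable_add) (simp_all add: E)
  then show ?thesis
  proof (rule Bochner_Integration.integrable_bound)
    show "(\<lambda>p. ln (norm (fst p - snd p)) * ((\<rho>1 (fst p) - \<rho>2 (fst p)) * (\<rho>1 (snd p) - \<rho>2 (snd p))))
        \<in> borel_measurable (lborel \<Otimes>\<^sub>M lborel)"
      by measurable
    have abs_diff: "\<bar>\<rho>1 x - \<rho>2 x\<bar> \<le> \<rho>1 x + \<rho>2 x" for x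
      using nonneg[of x] by (simp add: abs_le_iff)
    show "AE p in lborel \<Otimes>\<^sub>M lborel.
        norm (ln (norm (fst p - snd p)) * ((\<rho>1 (fst p) - \<rho>2 (fst p)) * (\<rho>1 (snd p) - \<rho>2 (snd p))))
        \<le> norm (E \<rho>1 \<rho>1 p + E \<rho>1 \<rho>2 p + E \<rho>2 \<rho>1 p + E \<rho>2 \<rho>2 p)"
    proof (rule AE_I2)
      fix p :: "'a \<times> 'a"
      have "norm (ln (norm (fst p - snd p)) * ((\<rho>1 (fst p) - \<rho>2 (fst p)) * (\<rho>1 (snd p) - \<rho>2 (snd p))))
          \<le> \<bar>ln (norm (fst p - snd p))\<bar> * ((\<rho>1 (fst p) + \<rho>2 (fst p)) * (\<rho>1 (snd p) + \<rho>2 (snd p)))"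
        unfolding norm_mult real_norm_def abs_mult
        by (intro mult_left_mono mult_mono abs_diff) (auto intro: add_nonneg_nonneg nonneg)
      also have "\<dots> = E \<rho>1 \<rho>1 p + E \<rho>1 \<rho>2 p + E \<rho>2 \<rho>1 p + E \<rho>2 \<rho>2 p"
        by (simp add: E_def distrib_left distrib_right mult.assoc)
      also have "\<dots> \<le> norm (E \<rho>1 \<rho>1 p + E \<rho>1 \<rho>2 p + E \<rho>2 \<rho>1 p + E \<rho>2 \<rho>2 p)"
        by simp
      finally show "norm (ln (norm (fst p - snd p)) * ((\<rho>1 (fst p) - \<rho>2 (fst p)) * (\<rho>1 (snd p) - \<rho>2 (snd p))))
          \<le> norm (E \<rho>1 \<rho>1 p + E \<rho>1 \<rho>2 p + E \<rho>2 \<rho>1 p + E \<rho>2 \<rho>2 p)" .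
    qed
  qed
qed

lemma log_pot_difference_pairing_nonpos:
  fixes \<rho>1 \<rho>2 :: "'a::euclidean_space \<Rightarrow> real"
  assumes \<rho>1: "finite_log_energy_density \<rho>1" and \<rho>2: "finite_log_energy_density \<rho>2"
    and L1: "AE x in lborel. integrable lborel (\<lambda>y. ln (norm (x - y)) * \<rho>1 y)"
    and L2: "AE x in lborel. integrable lborel (\<lambda>y. ln (norm (x - y)) * \<rho>2 y)"
  defines "U \<rho> x \<equiv> \<integral>y. ln (norm (x - y)) * \<rho> y \<partial>lborel"
  shows "integrable lborel (\<lambda>x. (\<rho>1 x - \<rho>2 x) * (U \<rho>1 x - U \<rho>2 x))"
    and "(\<integral>x. (\<rho>1 x - \<rho>2 x) * (U \<rho>1 x - U \<rho>2 x) \<partial>lborel) \<le> 0"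
proof -
  define f where "f = (\<lambda>x. \<rho>1 x - \<rho>2 x)"
  have f: "integrable lborel f" and f0: "(\<integral>x. f x \<partial>lborel) = 0"
    using finite_log_energy_density_has_integral[OF \<rho>1] finite_log_energy_density_has_integral[OF \<rho>2]
    by (auto simp: f_def has_bochner_integral_iff)
  have E: "integrable (lborel \<Otimes>\<^sub>M lborel) (\<lambda>p. ln (norm (fst p - snd p)) * (f (fst p) * f (snd p)))"
    unfolding f_def by (rule integrable_log_energy_difference[OF \<rho>1 \<rho>2])
  have inner: "AE x in lborel.
      (\<integral>y. ln (norm (x - y)) * (f x * f y) \<partial>lborel) = (\<rho>1 x - \<rho>2 x) * (U \<rho>1 x - U \<rho>2 x)"
    using L1 L2
  proof eventually_elim
    case (elim x)
    have "(\<lambda>y. ln (norm (x - y)) * (f x * f y))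
        = (\<lambda>y. f x * (ln (norm (x - y)) * \<rho>1 y) - f x * (ln (norm (x - y)) * \<rho>2 y))"
      by (simp add: f_def fun_eq_iff right_diff_distrib mult.left_commute)
    then show ?case
      using elim by (simp add: U_def f_def right_diff_distrib)
  qed
  have [measurable]: "\<rho>1 \<in> borel_measurable lborel" "\<rho>2 \<in> borel_measurable lborel"
    using \<rho>1 \<rho>2 by (auto simp: finite_log_energy_density_def)
  have meas: "(\<lambda>x. (\<rho>1 x - \<rho>2 x) * (U \<rho>1 x - U \<rho>2 x)) \<in> borel_measurable lborel"
    unfolding U_def by measurable
  have int_inner: "integrable lborel (\<lambda>x. \<integral>y. ln (norm (x - y)) * (f x * f y) \<partial>lborel)"
    using lborel_pair.integrable_fst'[OF E] by simp
  then show "integrable lborel (\<lambda>x. (\<rho>1 x - \<rho>2 x) * (U \<rho>1 x - U \<rho>2 x))"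
    by (rule integrable_cong_AE_imp[OF _ meas inner])
  have "(\<integral>x. (\<rho>1 x - \<rho>2 x) * (U \<rho>1 x - U \<rho>2 x) \<partial>lborel)
      = (\<integral>x. \<integral>y. ln (norm (x - y)) * (f x * f y) \<partial>lborel \<partial>lborel)"
    using inner by (intro integral_cong_AE meas borel_measurable_integrable[OF int_inner]) (auto simp: eq_commute)
  also have "\<dots> = (\<integral>p. ln (norm (fst p - snd p)) * (f (fst p) * f (snd p)) \<partial>(lborel \<Otimes>\<^sub>M lborel))"
    using lborel_pair.integral_fst'[OF E] by simp
  also have "\<dots> \<le> 0"
    by (rule log_kernel_nonpos[OF f f0 E])
  finally show "(\<integral>x. (\<rho>1 x - \<rho>2 x) * (U \<rho>1 x - U \<rho>2 x) \<partial>lborel) \<le> 0" .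
qed

lemma AE_of_integral_nonpos:
  fixes D :: "'a \<Rightarrow> real"
  assumes D: "integrable M D" "(\<integral>x. D x \<partial>M) \<le> 0"
    and D_AE: "AE x in M. 0 \<le> D x \<and> (D x = 0 \<longrightarrow> P x)"
  shows "AE x in M. P x"
proof -
  have "0 \<le> (\<integral>x. D x \<partial>M)"
    using D_AE by (intro integral_nonneg_AE) auto
  with D have "AE x in M. D x = 0"
    using integral_nonneg_eq_0_iff_AE[OF D(1)] D_AE by auto
  with D_AE show ?thesis
    by eventually_elim auto
qed

lemma gibbs_weights_monotone:
  fixes u a1 a2 z1 z2 :: real
  assumes u: "0 \<le> u" and z: "0 < z1" "0 < z2"
  defines "r1 \<equiv> u * exp a1 / z1" and "r2 \<equiv> u * exp a2 / z2"
  shows "0 \<le> (r1 - r2) * ((a1 - ln z1) - (a2 - ln z2))"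
    and "(r1 - r2) * ((a1 - ln z1) - (a2 - ln z2)) = 0 \<Longrightarrow> r1 = r2"
proof -
  define X where "X = (r1 - r2) * ((a1 - ln z1) - (a2 - ln z2))"
  have "0 \<le> X \<and> (X = 0 \<longrightarrow> r1 = r2)"
  proof (cases "u = 0")
    case True
    then show ?thesis
      by (simp add: X_def r1_def r2_def)
  next
    case False
    then have r: "0 < r1" "0 < r2"
      using u z by (simp_all add: r1_def r2_def)
    have "X = (r1 - r2) * (ln r1 - ln r2)"
      using u False z by (simp add: X_def r1_def r2_def ln_div ln_mult)
    moreover have "0 \<le> (r1 - r2) * (ln r1 - ln r2)"
    proof (cases "r1 \<le> r2")
      case True
      then show ?thesis
        using r by (intro mult_nonpos_nonpos) auto
    next
      case False
      then show ?thesis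
        using r by (intro mult_nonneg_nonneg) auto
    qed
    ultimately show ?thesis
      using r by auto
  qed
  then show "0 \<le> (r1 - r2) * ((a1 - ln z1) - (a2 - ln z2))"
    and "(r1 - r2) * ((a1 - ln z1) - (a2 - ln z2)) = 0 \<Longrightarrow> r1 = r2"
    by (simp_all add: X_def)
qed

text \<open>The quantity \<open>D\<close> below equals \<open>(\<rho>\<^sub>1 - \<rho>\<^sub>2) (ln \<rho>\<^sub>1 - ln \<rho>\<^sub>2) \<ge> 0\<close> where \<open>u > 0\<close>,
  while its integral is \<open>- \<beta>\<close> times the nonpositive logarithmic energy of \<open>\<rho>\<^sub>1 - \<rho>\<^sub>2\<close>.\<close>
lemma gibbs_densities_AE_eq:
  fixes \<rho>1 \<rho>2 u h :: "'a::euclidean_space \<Rightarrow> real"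
  assumes \<rho>1: "finite_log_energy_density \<rho>1" and \<rho>2: "finite_log_energy_density \<rho>2"
    and L1: "AE x in lborel. integrable lborel (\<lambda>y. ln (norm (x - y)) * \<rho>1 y)"
    and L2: "AE x in lborel. integrable lborel (\<lambda>y. ln (norm (x - y)) * \<rho>2 y)"
    and \<beta>: "\<beta> < 0" and u: "AE x in lborel. 0 \<le> u x" and z: "0 < z1" "0 < z2"
  defines "U \<rho> x \<equiv> \<integral>y. ln (norm (x - y)) * \<rho> y \<partial>lborel"
  assumes eq1: "AE x in lborel. \<rho>1 x = u x * exp (- \<beta> * U \<rho>1 x + h x) / z1"
    and eq2: "AE x in lborel. \<rho>2 x = u x * exp (- \<beta> * U \<rho>2 x + h x) / z2"
  shows "AE x in lborel. \<rho>1 x = \<rho>2 x"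
proof -
  define D where "D x = (\<rho>1 x - \<rho>2 x) * ((- \<beta> * U \<rho>1 x + h x - ln z1) - (- \<beta> * U \<rho>2 x + h x - ln z2))" for x
  have "D = (\<lambda>x. - \<beta> * ((\<rho>1 x - \<rho>2 x) * (U \<rho>1 x - U \<rho>2 x)) + (ln z2 - ln z1) * (\<rho>1 x - \<rho>2 x))"
    by (auto simp: D_def algebra_simps)
  moreover have "integrable lborel (\<lambda>x. (\<rho>1 x - \<rho>2 x) * (U \<rho>1 x - U \<rho>2 x))"
    and "(\<integral>x. (\<rho>1 x - \<rho>2 x) * (U \<rho>1 x - U \<rho>2 x) \<partial>lborel) \<le> 0"
    using log_pot_difference_pairing_nonpos[OF \<rho>1 \<rho>2 L1 L2] unfolding U_def by simp_all
  moreover have "integrable lborel (\<lambda>x. \<rho>1 x - \<rho>2 x)" "(\<integral>x. \<rho>1 x - \<rho>2 x \<partial>lborel) = 0"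
    using finite_log_energy_density_has_integral[OF \<rho>1] finite_log_energy_density_has_integral[OF \<rho>2]
    by (auto simp: has_bochner_integral_iff)
  ultimately have "integrable lborel D" "(\<integral>x. D x \<partial>lborel) \<le> 0"
    using \<beta> by (simp_all add: mult_nonpos_nonpos)
  moreover have "AE x in lborel. 0 \<le> D x \<and> (D x = 0 \<longrightarrow> \<rho>1 x = \<rho>2 x)"
    using eq1 eq2 u
  proof eventually_elim
    case (elim x)
    then show ?case
      using gibbs_weights_monotone[of "u x" z1 z2 "- \<beta> * U \<rho>1 x + h x" "- \<beta> * U \<rho>2 x + h x"] z
      by (simp add: D_def)
  qed
  ultimately show ?thesis
    by (rule AE_of_integral_nonpos)
qed

lemma fp_solution_gibbs_form:
  assumes "is_fp_solution \<Upsilon> H \<beta> \<rho>"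
  defines "z \<equiv> \<integral>x. fp_num \<Upsilon> H \<beta> \<rho> x \<partial>lborel"
  shows "finite_log_energy_density \<rho>"
    and "AE x in lborel. integrable lborel (\<lambda>y. ln (norm (x - y)) * \<rho> y)"
    and "0 < z"
    and "AE x in lborel. \<rho> x = \<Upsilon> x * exp (- \<beta> * (\<integral>y. ln (norm (x - y)) * \<rho> y \<partial>lborel) + 2 * H x) / z"
  using assms
  by (simp_all add: is_fp_solution_def finite_log_energy_density_def log_energy_def fp_num_def log_pot_def)

theorem theorem9p1:
  fixes \<Upsilon> H :: "complex \<Rightarrow> real" and \<beta> :: real and \<rho>1 \<rho>2 :: "complex \<Rightarrow> real"
  assumes Ups_meas: "\<Upsilon> \<in> borel_measurable lborel"
    and Ups_bdd: "\<exists>M. AE x in lborel. \<bar>\<Upsilon> x\<bar> \<le> M"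
    and Ups_nonneg: "AE x in lborel. 0 \<le> \<Upsilon> x"
    and Ups_nonzero: "\<not> (AE x in lborel. \<Upsilon> x = 0)"
    and H_harm: "entire_harmonic H"
    and decay: "\<And>\<gamma>. 0 < \<gamma> \<Longrightarrow> \<gamma> < 2 \<Longrightarrow>
        ((\<lambda>y. \<integral>\<^sup>+ x\<in>ball y 1. ennreal (\<Upsilon> x * exp (2 * H x) * norm (x - y) powr (- \<gamma>)) \<partial>lborel)
          \<longlongrightarrow> 0) at_infinity"
    and moment: "\<exists>q>0. (\<integral>\<^sup>+ x. ennreal (\<Upsilon> x * exp (2 * H x) * norm x powr q) \<partial>lborel) < \<infinity>"
    and beta_neg: "\<beta> < 0"
    and sol1: "is_fp_solution \<Upsilon> H \<beta> \<rho>1"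
    and sol2: "is_fp_solution \<Upsilon> H \<beta> \<rho>2"
  shows "AE x in lborel. \<rho>1 x = \<rho>2 x"
proof -
  note S1 = fp_solution_gibbs_form[OF sol1] and S2 = fp_solution_gibbs_form[OF sol2]
  show ?thesis
    by (rule gibbs_densities_AE_eq[OF S1(1) S2(1) S1(2) S2(2) beta_neg Ups_nonneg S1(3) S2(3) S1(4) S2(4)])
qed

end
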